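(* Fix a set $\Psi\subseteq\mathcal{K}$, a number $q\ge0$, and for each $k\in\Psi$ an index $k'\in\mathcal{N}$. Define, for variables $p_n\ge0$ ($n\in\mathcal{N}$), $p_{k,k'}\ge0$ and $w_k\in(0,W^k_{MC}]$ ($k\in\Psi$), and multipliers $\lambda\ge0,\mu\ge0$, the Lagrangian $$\mathcal{L}=(1+\mu)\Big[\sum_{n=1}^N B^n_{SC}\log_2\!\Big(1+\tfrac{p_ng_n}{B^n_{SC}N_0}\Big)+\sum_{k\in\Psi}(W^k_{MC}-w_k)\log_2\!\Big(1+\tfrac{p_{k,k'}g_{k,k'}}{(W^k_{MC}-w_k)N_0}\Big)\Big]-\mu R^{SC}_{\min}$$ $$-q\Big(\sum_{n}\tfrac{p_n}{\xi}+\sum_{k\in\Psi}\tfrac{p_{k,k'}}{\xi}+\sum_{k\in\Psi}\big(2^{R^k_{MC}/w_k}-1\big)\tfrac{w_kN_0}{\xi h_k}+P_{\rm c}\Big)+\lambda\Big(P^{SC}_{\max}-\sum_n p_n-\sum_{k\in\Psi}p_{k,k'}-\sum_{k\in\Psi}\big(2^{R^k_{MC}/w_k}-1\big)\tfrac{w_kN_0}{h_k}\Big),$$ where $(W^k_{MC}-w_k)\log_2(\cdot)$ is interpreted as $0$ when $w_k=W^k_{MC}$. Then, given $\lambda$ and $\mu$, the bandwidth and power allocation maximizing $\mathcal{L}$ is $$w_k=\min\!\left(\frac{R^k_{MC}\ln2}{\mathcal{W}\!\left(\frac1e\Big(\frac{\mathcal{C}_k h_k}{(q/\xi+\lambda)N_0}-1\Big)\right)+1},\;W^k_{MC}\right),\quad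 k\in\Psi,$$ $$p_{k,k'}=(W^k_{MC}-w_k)\left[\frac{(1+\mu)\xi}{(q+\lambda\xi)\ln2}-\frac{N_0}{g_{k,k'}}\right]^+,\quad k\in\Psi,$$ $$p_n=B^n_{SC}\left[\frac{(1+\mu)\xi}{(q+\lambda\xi)\ln2}-\frac{N_0}{g_n}\right]^+,\quad n\in\mathcal{N},$$ where $[x]^+=\max\{x,0\}$, $\mathcal{W}$ is the Lambert $W$ function (i.e. $x=\mathcal{W}(x)e^{\mathcal{W}(x)}$), $\widetilde{p}_{k,k'}=\left[\frac{(1+\mu)\xi}{(q+\lambda\xi)\ln2}-\frac{N_0}{g_{k,k'}}\right]^+$, and $\mathcal{C}_k=(1+\mu)\log_2\!\big(1+\widetilde{p}_{k,k'}\frac{g_{k,k'}}{N_0}\big)-\big(\frac{q}{\xi}+\lambda\big)\widetilde{p}_{k,k'}$.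
   Context: Constants: $N_0>0$ noise spectral density; $\xi\in(0,1]$ power amplifier efficiency; $P_{\rm c}>0$ circuit power; $P^{SC}_{\max}>0$; $R^{SC}_{\min}\ge0$. For each $k\in\mathcal{K}=\{1,\dots,K\}$: $W^k_{MC}>0$, $R^k_{MC}>0$, $h_k>0$, and $g_{k,n}>0$ for $n\in\mathcal{N}=\{1,\dots,N\}$. For each $n\in\mathcal{N}$: $B^n_{SC}>0$, $g_n>0$. This Lagrangian arises from the subtractive (Dinkelbach) form of the small-cell energy-efficiency maximization for a fixed set $\Psi$ of served macro users, with $b_{k,k'}=W^k_{MC}-w_k$ and $q_k=(2^{R^k_{MC}/w_k}-1)w_kN_0/h_k$ substituted; $\lambda$ and $\mu$ are the multipliers of the total power constraint and the minimum rate constraint. *)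

theory Defs
  imports Complex_Main
begin

definition pos_part :: "real \<Rightarrow> real" where
  "pos_part x = max x 0"

definition lambertW :: "real \<Rightarrow> real" where
  "lambertW x = (THE y. y \<ge> -1 \<and> y * exp y = x)"

definition bw_rate :: "real \<Rightarrow> real \<Rightarrow> real \<Rightarrow> real \<Rightarrow> real" where
  "bw_rate N0 b p g = (if b = 0 then 0 else b * log 2 (1 + p * g / (b * N0)))"

text \<open>The Lagrangian.  Index sets: \<N> = {1..N}; \<Psi> is the served macro users;
  kp k is the index k' for k \<in> \<Psi>; g2 k n is g_{k,n}.  Variables:
  p n = p_n, pk k = p_{k,k'}, w k = w_k.\<close>
definition lagrangian ::
  "real \<Rightarrow> real \<Rightarrow> real \<Rightarrow> real \<Rightarrow> real \<Rightarrow> nat \<Rightarrow>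
   (nat \<Rightarrow> real) \<Rightarrow> (nat \<Rightarrow> real) \<Rightarrow> (nat \<Rightarrow> real) \<Rightarrow> (nat \<Rightarrow> nat \<Rightarrow> real) \<Rightarrow>
   (nat \<Rightarrow> real) \<Rightarrow> (nat \<Rightarrow> real) \<Rightarrow> nat set \<Rightarrow> (nat \<Rightarrow> nat) \<Rightarrow>
   real \<Rightarrow> real \<Rightarrow> real \<Rightarrow>
   (nat \<Rightarrow> real) \<Rightarrow> (nat \<Rightarrow> real) \<Rightarrow> (nat \<Rightarrow> real) \<Rightarrow> real" where
  "lagrangian N0 \<xi> Pc Pmax Rmin N W R h g2 B g \<Psi> kp q lam \<mu> p pk w =
     (1 + \<mu>) * ((\<Sum>n\<in>{1..N}. B n * log 2 (1 + p n * g n / (B n * N0)))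
               + (\<Sum>k\<in>\<Psi>. bw_rate N0 (W k - w k) (pk k) (g2 k (kp k))))
     - \<mu> * Rmin
     - q * ((\<Sum>n\<in>{1..N}. p n / \<xi>) + (\<Sum>k\<in>\<Psi>. pk k / \<xi>)
            + (\<Sum>k\<in>\<Psi>. (2 powr (R k / w k) - 1) * w k * N0 / (\<xi> * h k)) + Pc)
     + lam * (Pmax - (\<Sum>n\<in>{1..N}. p n) - (\<Sum>k\<in>\<Psi>. pk k)
            - (\<Sum>k\<in>\<Psi>. (2 powr (R k / w k) - 1) * w k * N0 / h k))"

definition water_level :: "real \<Rightarrow> real \<Rightarrow> real \<Rightarrow> real \<Rightarrow> real" where
  "water_level \<xi> q lam \<mu> = (1 + \<mu>) * \<xi> / ((q + lam * \<xi>) * ln 2)"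

definition p_tilde :: "real \<Rightarrow> real \<Rightarrow> real \<Rightarrow> real \<Rightarrow> real \<Rightarrow> real \<Rightarrow> real" where
  "p_tilde N0 \<xi> q lam \<mu> gkk = pos_part (water_level \<xi> q lam \<mu> - N0 / gkk)"

definition C_coef :: "real \<Rightarrow> real \<Rightarrow> real \<Rightarrow> real \<Rightarrow> real \<Rightarrow> real \<Rightarrow> real" where
  "C_coef N0 \<xi> q lam \<mu> gkk =
     (let pt = p_tilde N0 \<xi> q lam \<mu> gkk in
      (1 + \<mu>) * log 2 (1 + pt * gkk / N0) - (q / \<xi> + lam) * pt)"

text \<open>Optimal bandwidth.  The denominator W(.)+1 is \<ge> 0; when it is 0 the
  first argument of min is +\<infinity> (positive numerator over 0), so the min is W_MC.\<close>
definition w_opt :: "real \<Rightarrow> real \<Rightarrow> real \<Rightarrow> real \<Rightarrow> real \<Rightarrow> real \<Rightarrow> real \<Rightarrow> real \<Rightarrow> real \<Rightarrow> real" where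
  "w_opt N0 \<xi> q lam \<mu> Wk Rk hk gkk =
     (let d = lambertW (exp (-1) * (C_coef N0 \<xi> q lam \<mu> gkk * hk / ((q / \<xi> + lam) * N0) - 1)) + 1
      in if d > 0 then min (Rk * ln 2 / d) Wk else Wk)"

definition pk_opt :: "real \<Rightarrow> real \<Rightarrow> real \<Rightarrow> real \<Rightarrow> real \<Rightarrow> real \<Rightarrow> real \<Rightarrow> real \<Rightarrow> real \<Rightarrow> real" where
  "pk_opt N0 \<xi> q lam \<mu> Wk Rk hk gkk =
     (Wk - w_opt N0 \<xi> q lam \<mu> Wk Rk hk gkk) * p_tilde N0 \<xi> q lam \<mu> gkk"

definition pn_opt :: "real \<Rightarrow> real \<Rightarrow> real \<Rightarrow> real \<Rightarrow> real \<Rightarrow> real \<Rightarrow> real \<Rightarrow> real" where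
  "pn_opt N0 \<xi> q lam \<mu> Bn gn = Bn * pos_part (water_level \<xi> q lam \<mu> - N0 / gn)"

end

theory Submission
  imports Defs
begin

text \<open>The Lagrangian is a constant plus a sum of independent terms, one per subchannel and one
  per macro user.  A subchannel term \<open>a B log\<^sub>2(1 + p g/(B N\<^sub>0)) - c p\<close> is concave in \<open>p\<close>, and the
  tangent inequality for \<open>ln\<close> puts its maximum at the water-filling level.  A macro-user term
  is, for fixed \<open>w\<close>, the perspective of the same concave function, so its maximum over
  \<open>p\<^sub>k\<^sub>,\<^sub>k\<^sub>'\<close> is \<open>(W - w) C\<^sub>k\<close>.  What remains, \<open>(W - w) C\<^sub>k - A (w e\<^sup>a\<^sup>/\<^sup>w - w)\<close> with
  \<open>A = c N\<^sub>0/h\<close> and \<open>a = R ln 2\<close>, is concave in \<open>w\<close> because \<open>w e\<^sup>a\<^sup>/\<^sup>w\<close> is convex; its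
  stationarity condition \<open>(a/w - 1) e\<^sup>a\<^sup>/\<^sup>w = C\<^sub>k/A - 1\<close> is solved by the Lambert W function,
  and when the stationary point exceeds \<open>W\<close> the objective is increasing on \<open>(0, W]\<close>.\<close>

lemma mult_exp_strict_mono:
  fixes a b :: real
  assumes "-1 \<le> a" "a < b"
  shows "a * exp a < b * exp b"
proof -
  have "\<And>x. a \<le> x \<Longrightarrow> x \<le> b \<Longrightarrow> ((\<lambda>x. x * exp x) has_real_derivative (1 + x) * exp x) (at x)"
    by (auto intro!: derivative_eq_intros simp: algebra_simps)
  from MVT2[OF assms(2) this] obtain z where
    z: "a < z" "z < b" "b * exp b - a * exp a = (b - a) * ((1 + z) * exp z)"
    by auto
  have "(b - a) * ((1 + z) * exp z) > 0"
    using z assms by (intro mult_pos_pos) auto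
  with z show ?thesis by simp
qed

lemma lambertW_eqI:
  fixes x y :: real
  assumes "-1 \<le> y" "y * exp y = x"
  shows "lambertW x = y"
  unfolding lambertW_def
proof (rule the_equality)
  fix z assume z: "-1 \<le> z \<and> z * exp z = x"
  show "z = y"
  proof (cases z y rule: linorder_cases)
    case less
    with z mult_exp_strict_mono[of z y] assms show ?thesis by auto
  next
    case greater
    with assms mult_exp_strict_mono[of y z] z show ?thesis by auto
  qed
qed (use assms in simp)

lemma lambertW_spec:
  fixes x :: real
  assumes "-exp (-1) \<le> x"
  shows "-1 \<le> lambertW x \<and> lambertW x * exp (lambertW x) = x"
proof -
  have lower: "(-1) * exp (-1) \<le> x"
    using assms by simp
  have upper: "x \<le> max x 0 * exp (max x 0)"
  proof (cases "x \<ge> 0")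
    case True
    then have "x * 1 \<le> x * exp x" by (intro mult_left_mono) auto
    with True show ?thesis by simp
  qed simp
  have "continuous_on {-1..max x 0} (\<lambda>y::real. y * exp y)"
    by (intro continuous_intros)
  with IVT'[of "\<lambda>y. y * exp y", OF lower upper] obtain y where "-1 \<le> y" "y * exp y = x"
    by (metis max.cobounded2 order.trans neg_le_0_iff_le zero_le_one)
  with lambertW_eqI show ?thesis by simp
qed

lemma lambertW_mult_exp_plus_one:
  fixes t :: real
  assumes "-1 \<le> t"
  defines "v \<equiv> lambertW (exp (-1) * t)"
  shows "0 \<le> v + 1" and "v * exp (v + 1) = t"
proof -
  have "-exp (-1) \<le> exp (-1) * t"
    using assms mult_left_mono[of "-1" t "exp (-1)"] by simp
  from lambertW_spec[OF this] have v: "-1 \<le> v" "v * exp v = exp (-1) * t"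
    unfolding v_def by auto
  then show "0 \<le> v + 1" by simp
  have "v * exp (v + 1) = exp 1 * (v * exp v)"
    by (simp add: exp_add)
  also have "\<dots> = t"
    using v(2) by (simp add: exp_minus field_simps)
  finally show "v * exp (v + 1) = t" .
qed

lemma ln_le_tangent:
  fixes x y :: real
  assumes "0 < x" "0 < y"
  shows "ln y \<le> ln x + (y - x) / x"
proof -
  have "ln y - ln x = ln (y / x)"
    using assms by (simp add: ln_div)
  also have "\<dots> \<le> y / x - 1"
    using assms by (intro ln_le_minus_one) simp
  also have "\<dots> = (y - x) / x"
    using assms by (simp add: field_simps)
  finally show ?thesis by simp
qed

lemma water_filling_le:
  fixes a c s u :: real
  assumes a: "0 \<le> a" and c: "0 < c" and s: "0 < s" and u: "0 \<le> u"
  defines "p \<equiv> pos_part (a / (c * ln 2) - 1 / s)"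
  shows "a * log 2 (1 + u * s) - c * u \<le> a * log 2 (1 + p * s) - c * p"
proof -
  have p: "0 \<le> p" unfolding p_def pos_part_def by simp
  define x where "x = 1 + p * s"
  have x: "0 < x" and y: "0 < 1 + u * s"
    using p s u by (simp_all add: x_def add_pos_nonneg)
  have slope: "a / ln 2 * (s / x) * (u - p) \<le> c * (u - p)"
  proof (cases "a / (c * ln 2) > 1 / s")
    case True
    then have "x = s * a / (c * ln 2)"
      using s by (simp add: x_def p_def pos_part_def field_simps)
    then have "a / ln 2 * (s / x) = c"
      using True s c x by (auto simp: field_simps)
    then show ?thesis by simp
  next
    case False
    then have "p = 0" "x = 1"
      by (simp_all add: x_def p_def pos_part_def)
    moreover have "a / ln 2 * s \<le> c"
      using False s c by (simp add: field_simps)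
    ultimately show ?thesis
      using mult_right_mono[OF _ u, of "a / ln 2 * s" c] by simp
  qed
  have "a * log 2 (1 + u * s) - a * log 2 x = a / ln 2 * (ln (1 + u * s) - ln x)"
    by (simp add: log_def field_simps)
  also have "\<dots> \<le> a / ln 2 * ((1 + u * s - x) / x)"
    using ln_le_tangent[OF x y] a by (intro mult_left_mono) auto
  also have "\<dots> = a / ln 2 * (s / x) * (u - p)"
    using x unfolding x_def by (simp add: field_simps)
  also have "\<dots> \<le> c * (u - p)"
    by (fact slope)
  finally show ?thesis
    by (simp add: x_def algebra_simps)
qed

lemma mult_exp_div_ge_tangent:
  fixes a w w0 :: real
  assumes "0 < w" "0 < w0"
  shows "w0 * exp (a / w0) + exp (a / w0) * (1 - a / w0) * (w - w0) \<le> w * exp (a / w)"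
proof -
  have "exp (a / w0) * (1 + (a / w - a / w0)) \<le> exp (a / w0) * exp (a / w - a / w0)"
    by (intro mult_left_mono) auto
  also have "\<dots> = exp (a / w)"
    by (simp flip: exp_add)
  finally have "w * (exp (a / w0) * (1 + (a / w - a / w0))) \<le> w * exp (a / w)"
    using assms by (intro mult_left_mono) auto
  moreover have "w * (exp (a / w0) * (1 + (a / w - a / w0)))
      = w0 * exp (a / w0) + exp (a / w0) * (1 - a / w0) * (w - w0)"
    using assms by (simp add: field_simps)
  ultimately show ?thesis by simp
qed

lemma minus_one_mult_exp_mono:
  fixes a b :: real
  assumes "0 \<le> a" "a \<le> b"
  shows "(a - 1) * exp a \<le> (b - 1) * exp b"
proof (cases "a = b")
  case False
  then have "(a - 1) * exp (a - 1) < (b - 1) * exp (b - 1)"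
    using assms by (intro mult_exp_strict_mono) auto
  then have "exp 1 * ((a - 1) * exp (a - 1)) \<le> exp 1 * ((b - 1) * exp (b - 1))"
    by simp
  then show ?thesis by (simp add: exp_diff)
qed simp

text \<open>The maximiser over \<open>w \<in> (0, W]\<close> of \<open>(W - w) C - A (w e\<^sup>a\<^sup>/\<^sup>w - w)\<close>; here
  \<open>d = a/w\<close> solves the stationarity condition \<open>(d - 1) e\<^sup>d = C/A - 1\<close>.\<close>
definition lambert_bandwidth :: "real \<Rightarrow> real \<Rightarrow> real \<Rightarrow> real \<Rightarrow> real" where
  "lambert_bandwidth A C a W =
     (let d = lambertW (exp (-1) * (C / A - 1)) + 1 in if d > 0 then min (a / d) W else W)"

lemma lambert_bandwidth_pos:
  assumes "0 \<le> C / A" "0 < a" "0 < W"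
  shows "0 < lambert_bandwidth A C a W"
  using lambertW_mult_exp_plus_one(1)[of "C / A - 1"] assms
  by (auto simp: lambert_bandwidth_def Let_def min_def)

lemma lambert_bandwidth_le: "lambert_bandwidth A C a W \<le> W"
  by (simp add: lambert_bandwidth_def Let_def)

lemma lambert_bandwidth_kkt:
  fixes A C a W w :: real
  assumes A: "0 < A" and C: "0 \<le> C" and a: "0 < a" and w: "0 < w" "w \<le> W"
  defines "w0 \<equiv> lambert_bandwidth A C a W"
  shows "(w - w0) * (A * ((a / w0 - 1) * exp (a / w0) + 1) - C) \<le> 0"
proof -
  define d where "d = lambertW (exp (-1) * (C / A - 1)) + 1"
  have "-1 \<le> C / A - 1"
    using A C by simp
  from lambertW_mult_exp_plus_one[OF this] have d: "0 \<le> d" "A * ((d - 1) * exp d + 1) = C"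
    using A by (simp_all add: d_def field_simps)
  show ?thesis
  proof (cases "d > 0 \<and> a / d \<le> W")
    case True
    then have "a / w0 = d"
      using a by (simp add: w0_def lambert_bandwidth_def d_def [symmetric])
    with d show ?thesis by simp
  next
    case False
    then have w0: "w0 = W"
      by (auto simp: w0_def lambert_bandwidth_def d_def [symmetric])
    have "d \<le> a / W"
    proof (cases "d = 0")
      case False
      with \<open>\<not> (d > 0 \<and> a / d \<le> W)\<close> d(1) have "W < a / d" by simp
      with False d(1) w show ?thesis by (simp add: field_simps)
    qed (use a w in simp)
    with d(1) have "(d - 1) * exp d \<le> (a / W - 1) * exp (a / W)"
      by (rule minus_one_mult_exp_mono)
    with d(2) A have "C \<le> A * ((a / W - 1) * exp (a / W) + 1)"
      by (metis add_le_cancel_right mult_le_cancel_left_pos)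
    with w w0 show ?thesis
      by (simp add: mult_nonpos_nonneg)
  qed
qed

lemma lambert_bandwidth_max:
  fixes A C a W w :: real
  assumes A: "0 < A" and C: "0 \<le> C" and a: "0 < a" and W: "0 < W" and w: "0 < w" "w \<le> W"
  defines "w0 \<equiv> lambert_bandwidth A C a W"
  shows "(W - w) * C - A * (w * exp (a / w) - w) \<le> (W - w0) * C - A * (w0 * exp (a / w0) - w0)"
proof -
  have w0: "0 < w0"
    using A C a W by (simp add: w0_def lambert_bandwidth_pos)
  have "(W - w) * C - A * (w * exp (a / w) - w) - ((W - w0) * C - A * (w0 * exp (a / w0) - w0))
      = A * (w - w0) - (w - w0) * C - A * (w * exp (a / w) - w0 * exp (a / w0))"
    by (simp add: algebra_simps)
  also have "\<dots> \<le> A * (w - w0) - (w - w0) * C - A * (exp (a / w0) * (1 - a / w0) * (w - w0))"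
    using mult_exp_div_ge_tangent[OF w(1) w0, of a] A by (simp add: mult_left_mono)
  also have "\<dots> = (w - w0) * (A * ((a / w0 - 1) * exp (a / w0) + 1) - C)"
    by (simp add: algebra_simps)
  also have "\<dots> \<le> 0"
    using lambert_bandwidth_kkt[OF A C a w] by (simp add: w0_def)
  finally show ?thesis by simp
qed

definition subchannel_utility :: "real \<Rightarrow> real \<Rightarrow> real \<Rightarrow> real \<Rightarrow> real \<Rightarrow> real \<Rightarrow> real" where
  "subchannel_utility a c N0 B g p = a * (B * log 2 (1 + p * g / (B * N0))) - c * p"

definition macro_user_utility ::
  "real \<Rightarrow> real \<Rightarrow> real \<Rightarrow> real \<Rightarrow> real \<Rightarrow> real \<Rightarrow> real \<Rightarrow> real \<Rightarrow> real \<Rightarrow> real" where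
  "macro_user_utility a c N0 W R h g pk w =
     a * bw_rate N0 (W - w) pk g - c * pk - c * ((2 powr (R / w) - 1) * w * N0 / h)"

lemma lagrangian_eq_sum_utilities:
  fixes \<xi> :: real
  assumes "0 < \<xi>"
  shows "lagrangian N0 \<xi> Pc Pmax Rmin N W R h g2 B g \<Psi> kp q lam \<mu> p pk w
    = lam * Pmax - \<mu> * Rmin - q * Pc
      + (\<Sum>n\<in>{1..N}. subchannel_utility (1 + \<mu>) (q / \<xi> + lam) N0 (B n) (g n) (p n))
      + (\<Sum>k\<in>\<Psi>. macro_user_utility (1 + \<mu>) (q / \<xi> + lam) N0 (W k) (R k) (h k) (g2 k (kp k))
                   (pk k) (w k))"
proof -
  let ?c = "q / \<xi> + lam"
  have sub: "(\<Sum>n\<in>{1..N}. subchannel_utility (1 + \<mu>) ?c N0 (B n) (g n) (p n))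
      = (1 + \<mu>) * (\<Sum>n\<in>{1..N}. B n * log 2 (1 + p n * g n / (B n * N0))) - ?c * (\<Sum>n\<in>{1..N}. p n)"
    by (simp add: subchannel_utility_def sum_subtractf sum_distrib_left)
  have macro: "(\<Sum>k\<in>\<Psi>. macro_user_utility (1 + \<mu>) ?c N0 (W k) (R k) (h k) (g2 k (kp k)) (pk k) (w k))
      = (1 + \<mu>) * (\<Sum>k\<in>\<Psi>. bw_rate N0 (W k - w k) (pk k) (g2 k (kp k))) - ?c * (\<Sum>k\<in>\<Psi>. pk k)
        - ?c * (\<Sum>k\<in>\<Psi>. (2 powr (R k / w k) - 1) * w k * N0 / h k)"
    by (simp add: macro_user_utility_def sum_subtractf sum_distrib_left)
  have "(\<Sum>k\<in>\<Psi>. (2 powr (R k / w k) - 1) * w k * N0 / (\<xi> * h k))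
      = (\<Sum>k\<in>\<Psi>. (2 powr (R k / w k) - 1) * w k * N0 / h k) / \<xi>"
    by (simp add: sum_divide_distrib mult.commute)
  with assms show ?thesis
    unfolding lagrangian_def sub macro by (simp add: sum_divide_distrib [symmetric] field_simps)
qed

lemma water_level_eq:
  fixes \<xi> :: real
  assumes "0 < \<xi>"
  shows "water_level \<xi> q lam \<mu> = (1 + \<mu>) / ((q / \<xi> + lam) * ln 2)"
  using assms by (simp add: water_level_def field_simps)

lemma p_tilde_eq_water_filling:
  fixes \<xi> :: real
  assumes "0 < \<xi>"
  shows "p_tilde N0 \<xi> q lam \<mu> g = pos_part ((1 + \<mu>) / ((q / \<xi> + lam) * ln 2) - 1 / (g / N0))"
  using assms by (simp add: p_tilde_def water_level_eq)

lemma C_coef_ge: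
  fixes N0 \<xi> q lam \<mu> g u :: real
  assumes N0: "0 < N0" and \<xi>: "0 < \<xi>" and qlam: "0 < q + lam * \<xi>" and \<mu>: "0 \<le> \<mu>"
    and g: "0 < g" and u: "0 \<le> u"
  shows "(1 + \<mu>) * log 2 (1 + u * g / N0) - (q / \<xi> + lam) * u \<le> C_coef N0 \<xi> q lam \<mu> g"
proof -
  let ?pt = "p_tilde N0 \<xi> q lam \<mu> g"
  have "0 < q / \<xi> + lam"
    using qlam \<xi> by (simp add: field_simps)
  then have "(1 + \<mu>) * log 2 (1 + u * (g / N0)) - (q / \<xi> + lam) * u
      \<le> (1 + \<mu>) * log 2 (1 + ?pt * (g / N0)) - (q / \<xi> + lam) * ?pt"
    unfolding p_tilde_eq_water_filling[OF \<xi>] using \<mu> g N0 u by (intro water_filling_le) auto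
  then show ?thesis
    by (simp add: C_coef_def Let_def)
qed

lemma subchannel_utility_le_pn_opt:
  fixes N0 \<xi> q lam \<mu> B g p :: real
  assumes N0: "0 < N0" and \<xi>: "0 < \<xi>" and qlam: "0 < q + lam * \<xi>" and \<mu>: "0 \<le> \<mu>"
    and B: "0 < B" and g: "0 < g" and p: "0 \<le> p"
  shows "subchannel_utility (1 + \<mu>) (q / \<xi> + lam) N0 B g p
       \<le> subchannel_utility (1 + \<mu>) (q / \<xi> + lam) N0 B g (pn_opt N0 \<xi> q lam \<mu> B g)"
proof -
  let ?c = "q / \<xi> + lam" and ?pt = "p_tilde N0 \<xi> q lam \<mu> g"
  have "(1 + \<mu>) * log 2 (1 + p / B * g / N0) - ?c * (p / B) \<le> C_coef N0 \<xi> q lam \<mu> g"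
    using C_coef_ge[OF N0 \<xi> qlam \<mu> g, of "p / B"] p B by simp
  then have "B * ((1 + \<mu>) * log 2 (1 + p / B * g / N0) - ?c * (p / B))
      \<le> B * ((1 + \<mu>) * log 2 (1 + ?pt * g / N0) - ?c * ?pt)"
    using B by (simp add: C_coef_def Let_def)
  then show ?thesis
    using B by (simp add: subchannel_utility_def pn_opt_def p_tilde_def right_diff_distrib mult.left_commute)
qed

lemma macro_rate_le_C_coef:
  fixes N0 \<xi> q lam \<mu> b g pk :: real
  assumes N0: "0 < N0" and \<xi>: "0 < \<xi>" and qlam: "0 < q + lam * \<xi>" and \<mu>: "0 \<le> \<mu>"
    and b: "0 \<le> b" and g: "0 < g" and pk: "0 \<le> pk"
  shows "(1 + \<mu>) * bw_rate N0 b pk g - (q / \<xi> + lam) * pk \<le> b * C_coef N0 \<xi> q lam \<mu> g"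
proof (cases "b = 0")
  case True
  have "0 < q / \<xi> + lam"
    using qlam \<xi> by (simp add: field_simps)
  with pk True show ?thesis
    by (simp add: bw_rate_def)
next
  case False
  with b have b: "0 < b" by simp
  have "(1 + \<mu>) * bw_rate N0 b pk g - (q / \<xi> + lam) * pk
      = b * ((1 + \<mu>) * log 2 (1 + pk / b * g / N0) - (q / \<xi> + lam) * (pk / b))"
    using b by (simp add: bw_rate_def right_diff_distrib)
  also have "\<dots> \<le> b * C_coef N0 \<xi> q lam \<mu> g"
    using C_coef_ge[OF N0 \<xi> qlam \<mu> g, of "pk / b"] b pk by simp
  finally show ?thesis .
qed

lemma macro_rate_p_tilde:
  "(1 + \<mu>) * bw_rate N0 b (b * p_tilde N0 \<xi> q lam \<mu> g) g - (q / \<xi> + lam) * (b * p_tilde N0 \<xi> q lam \<mu> g)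
     = b * C_coef N0 \<xi> q lam \<mu> g"
proof (cases "b = 0")
  case False
  then have "bw_rate N0 b (b * p_tilde N0 \<xi> q lam \<mu> g) g = b * log 2 (1 + p_tilde N0 \<xi> q lam \<mu> g * g / N0)"
    by (simp add: bw_rate_def)
  then show ?thesis
    by (simp add: C_coef_def Let_def right_diff_distrib)
qed (simp add: bw_rate_def)

lemma macro_power_cost_eq:
  fixes c R w N0 h :: real
  shows "c * ((2 powr (R / w) - 1) * w * N0 / h) = c * N0 / h * (w * exp (R * ln 2 / w) - w)"
  by (simp add: powr_def field_simps)

lemma w_opt_eq_lambert_bandwidth:
  "w_opt N0 \<xi> q lam \<mu> Wk Rk hk g
     = lambert_bandwidth ((q / \<xi> + lam) * N0 / hk) (C_coef N0 \<xi> q lam \<mu> g) (Rk * ln 2) Wk"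
  by (simp add: w_opt_def lambert_bandwidth_def)

lemma w_opt_bounds:
  fixes N0 \<xi> q lam \<mu> Wk Rk hk g :: real
  assumes N0: "0 < N0" and \<xi>: "0 < \<xi>" and qlam: "0 < q + lam * \<xi>" and \<mu>: "0 \<le> \<mu>"
    and W: "0 < Wk" and R: "0 < Rk" and h: "0 < hk" and g: "0 < g"
  shows "0 < w_opt N0 \<xi> q lam \<mu> Wk Rk hk g" and "w_opt N0 \<xi> q lam \<mu> Wk Rk hk g \<le> Wk"
proof -
  have "0 \<le> C_coef N0 \<xi> q lam \<mu> g"
    using C_coef_ge[OF N0 \<xi> qlam \<mu> g, of 0] by simp
  moreover have "0 < q / \<xi> + lam"
    using qlam \<xi> by (simp add: field_simps)
  then have "0 < (q / \<xi> + lam) * N0 / hk"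
    using N0 h by simp
  ultimately have "0 \<le> C_coef N0 \<xi> q lam \<mu> g / ((q / \<xi> + lam) * N0 / hk)"
    by (rule divide_nonneg_pos)
  then show "0 < w_opt N0 \<xi> q lam \<mu> Wk Rk hk g"
    unfolding w_opt_eq_lambert_bandwidth using R W by (intro lambert_bandwidth_pos) auto
  show "w_opt N0 \<xi> q lam \<mu> Wk Rk hk g \<le> Wk"
    by (simp add: w_opt_eq_lambert_bandwidth lambert_bandwidth_le)
qed

lemma macro_user_utility_le_opt:
  fixes N0 \<xi> q lam \<mu> Wk Rk hk g pk w :: real
  assumes N0: "0 < N0" and \<xi>: "0 < \<xi>" and qlam: "0 < q + lam * \<xi>" and \<mu>: "0 \<le> \<mu>"
    and W: "0 < Wk" and R: "0 < Rk" and h: "0 < hk" and g: "0 < g"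
    and pk: "0 \<le> pk" and w: "0 < w" "w \<le> Wk"
  shows "macro_user_utility (1 + \<mu>) (q / \<xi> + lam) N0 Wk Rk hk g pk w
       \<le> macro_user_utility (1 + \<mu>) (q / \<xi> + lam) N0 Wk Rk hk g
            (pk_opt N0 \<xi> q lam \<mu> Wk Rk hk g) (w_opt N0 \<xi> q lam \<mu> Wk Rk hk g)"
proof -
  let ?c = "q / \<xi> + lam" and ?C = "C_coef N0 \<xi> q lam \<mu> g"
  let ?A = "?c * N0 / hk" and ?w0 = "w_opt N0 \<xi> q lam \<mu> Wk Rk hk g"
  have "0 < ?c"
    using qlam \<xi> by (simp add: field_simps)
  then have "0 < ?A"
    using N0 h by simp
  moreover have "0 \<le> ?C"
    using C_coef_ge[OF N0 \<xi> qlam \<mu> g, of 0] by simp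
  ultimately have "(Wk - w) * ?C - ?A * (w * exp (Rk * ln 2 / w) - w)
      \<le> (Wk - ?w0) * ?C - ?A * (?w0 * exp (Rk * ln 2 / ?w0) - ?w0)"
    using lambert_bandwidth_max[of ?A ?C "Rk * ln 2" Wk w] R W w
    by (simp add: w_opt_eq_lambert_bandwidth)
  moreover have "(1 + \<mu>) * bw_rate N0 (Wk - w) pk g - ?c * pk \<le> (Wk - w) * ?C"
    using macro_rate_le_C_coef[OF N0 \<xi> qlam \<mu> _ g pk] w by simp
  ultimately show ?thesis
    using macro_rate_p_tilde[of \<mu> N0 "Wk - ?w0" \<xi> q lam g]
    unfolding macro_user_utility_def macro_power_cost_eq pk_opt_def by linarith
qed

theorem theorem2:
  fixes N0 \<xi> Pc Pmax Rmin q lam \<mu> :: real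
    and K N :: nat
    and W R h B g :: "nat \<Rightarrow> real"
    and g2 :: "nat \<Rightarrow> nat \<Rightarrow> real"
    and \<Psi> :: "nat set" and kp :: "nat \<Rightarrow> nat"
  assumes N0: "N0 > 0" and xi: "0 < \<xi>" "\<xi> \<le> 1" and Pc: "Pc > 0"
    and Pmax: "Pmax > 0" and Rmin: "Rmin \<ge> 0"
    and W: "\<forall>k\<in>{1..K}. W k > 0" and R: "\<forall>k\<in>{1..K}. R k > 0"
    and h: "\<forall>k\<in>{1..K}. h k > 0"
    and g2: "\<forall>k\<in>{1..K}. \<forall>n\<in>{1..N}. g2 k n > 0"
    and B: "\<forall>n\<in>{1..N}. B n > 0" and g: "\<forall>n\<in>{1..N}. g n > 0"
    and Psi: "\<Psi> \<subseteq> {1..K}" and kp: "\<forall>k\<in>\<Psi>. kp k \<in> {1..N}"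
    and q: "q \<ge> 0" and lam: "lam \<ge> 0" and mu: "\<mu> \<ge> 0"
    and qlam: "q + lam * \<xi> > 0"
  shows "(\<forall>n\<in>{1..N}. pn_opt N0 \<xi> q lam \<mu> (B n) (g n) \<ge> 0)
       \<and> (\<forall>k\<in>\<Psi>. pk_opt N0 \<xi> q lam \<mu> (W k) (R k) (h k) (g2 k (kp k)) \<ge> 0
                \<and> 0 < w_opt N0 \<xi> q lam \<mu> (W k) (R k) (h k) (g2 k (kp k))
                \<and> w_opt N0 \<xi> q lam \<mu> (W k) (R k) (h k) (g2 k (kp k)) \<le> W k)
       \<and> (\<forall>p pk w.
            (\<forall>n\<in>{1..N}. p n \<ge> 0) \<longrightarrow>
            (\<forall>k\<in>\<Psi>. pk k \<ge> 0 \<and> 0 < w k \<and> w k \<le> W k) \<longrightarrow>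
            lagrangian N0 \<xi> Pc Pmax Rmin N W R h g2 B g \<Psi> kp q lam \<mu> p pk w
            \<le> lagrangian N0 \<xi> Pc Pmax Rmin N W R h g2 B g \<Psi> kp q lam \<mu>
                 (\<lambda>n. pn_opt N0 \<xi> q lam \<mu> (B n) (g n))
                 (\<lambda>k. pk_opt N0 \<xi> q lam \<mu> (W k) (R k) (h k) (g2 k (kp k)))
                 (\<lambda>k. w_opt N0 \<xi> q lam \<mu> (W k) (R k) (h k) (g2 k (kp k))))"
proof (intro conjI ballI allI impI)
  fix n assume "n \<in> {1..N}"
  with B have "0 < B n" by blast
  then show "pn_opt N0 \<xi> q lam \<mu> (B n) (g n) \<ge> 0"
    by (simp add: pn_opt_def pos_part_def)
next
  fix k assume "k \<in> \<Psi>"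
  then have "0 < W k" "0 < R k" "0 < h k" "0 < g2 k (kp k)"
    using Psi kp W R h g2 by auto
  note bounds = w_opt_bounds[OF N0 xi(1) qlam mu this]
  then show "0 < w_opt N0 \<xi> q lam \<mu> (W k) (R k) (h k) (g2 k (kp k))"
    and "w_opt N0 \<xi> q lam \<mu> (W k) (R k) (h k) (g2 k (kp k)) \<le> W k"
    by simp_all
  from bounds(2) show "pk_opt N0 \<xi> q lam \<mu> (W k) (R k) (h k) (g2 k (kp k)) \<ge> 0"
    by (simp add: pk_opt_def p_tilde_def pos_part_def)
next
  fix p pk w :: "nat \<Rightarrow> real"
  assume p: "\<forall>n\<in>{1..N}. p n \<ge> 0" and pkw: "\<forall>k\<in>\<Psi>. pk k \<ge> 0 \<and> 0 < w k \<and> w k \<le> W k"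
  have "(\<Sum>n\<in>{1..N}. subchannel_utility (1 + \<mu>) (q / \<xi> + lam) N0 (B n) (g n) (p n))
      \<le> (\<Sum>n\<in>{1..N}. subchannel_utility (1 + \<mu>) (q / \<xi> + lam) N0 (B n) (g n)
            (pn_opt N0 \<xi> q lam \<mu> (B n) (g n)))"
    using B g p by (intro sum_mono subchannel_utility_le_pn_opt[OF N0 xi(1) qlam mu]) auto
  moreover have "(\<Sum>k\<in>\<Psi>. macro_user_utility (1 + \<mu>) (q / \<xi> + lam) N0 (W k) (R k) (h k)
        (g2 k (kp k)) (pk k) (w k))
      \<le> (\<Sum>k\<in>\<Psi>. macro_user_utility (1 + \<mu>) (q / \<xi> + lam) N0 (W k) (R k) (h k) (g2 k (kp k))
            (pk_opt N0 \<xi> q lam \<mu> (W k) (R k) (h k) (g2 k (kp k)))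
            (w_opt N0 \<xi> q lam \<mu> (W k) (R k) (h k) (g2 k (kp k))))"
    using W R h g2 Psi kp pkw
    by (intro sum_mono macro_user_utility_le_opt[OF N0 xi(1) qlam mu]) (auto simp: subset_iff)
  ultimately show "lagrangian N0 \<xi> Pc Pmax Rmin N W R h g2 B g \<Psi> kp q lam \<mu> p pk w
      \<le> lagrangian N0 \<xi> Pc Pmax Rmin N W R h g2 B g \<Psi> kp q lam \<mu>
           (\<lambda>n. pn_opt N0 \<xi> q lam \<mu> (B n) (g n))
           (\<lambda>k. pk_opt N0 \<xi> q lam \<mu> (W k) (R k) (h k) (g2 k (kp k)))
           (\<lambda>k. w_opt N0 \<xi> q lam \<mu> (W k) (R k) (h k) (g2 k (kp k)))"
    unfolding lagrangian_eq_sum_utilities[OF xi(1)] by linarith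
qed

end
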